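(* Let $J$ be a simple current of $\mathcal{A}$, $\psi\in\{0,1\}$, and let $\langle p,q\rangle$, $\langle p',q'\rangle$ be off-diagonal fields of $\mathcal{A}_{\rm perm}$. Then $$N_{(J,\psi)\langle p,q\rangle}^{\phantom{(J,\psi)\langle p,q\rangle}\langle p',q'\rangle}=N_{Jp}^{\ \ p'}N_{Jq}^{\ \ q'}+N_{Jp}^{\ \ q'}N_{Jq}^{\ \ p'}.$$ Consequently, if moreover $J$ has order two ($J\cdot J=0$), then $\langle p,q\rangle$ is a fixed point of $(J,\psi)$ (i.e. $N_{(J,\psi)\langle p,q\rangle}^{\phantom{(J,\psi)\langle p,q\rangle}\langle p,q\rangle}=1$), for either value of $\psi$, if and only if either $Jp=p$ and $Jq=q$, or $Jp=q$.
   Context: Let $\mathcal{A}$ be a unitary rational conformal field theory with finite set of primary fields $I$, identity $0\in I$, central charge $c$, conformal weights $h_i$, and modular matrices $S$ (symmetric, unitary, with $S_{0i}\ge S_{00}>0$) and $T=\mathrm{diag}(e^{2\pi i(h_i-c/24)})$; put $P=T^{1/2}ST^{2}ST^{1/2}$. Fusion coefficients of $\mathcal{A}$ are $N_{ij}^{\ \ k}=\sum_{m\in I}S_{im}S_{jm}\overline{S_{km}}/S_{0m}$ (non-negative integers). A simple current $J$ of $\mathcal{A}$ is a field with $S_{J0}=S_{00}$; for each $i$ there is then a unique field $Ji$ with $N_{Ji}^{\ \ k}=\delta_{k,Ji}$. The $\mathbb{Z}_2$ permutation orbifold $\mathcal{A}_{\rm perm}$ has primaries: diagonal $(i,\psi)$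 ($i\in I$, $\psi\in\{0,1\}$), off-diagonal $\langle i,j\rangle$ (unordered pairs $i\neq j$), twisted $\widehat{(i,\psi)}$; identity $(0,0)$; modular matrix $S^{BHS}$ given by $S^{BHS}_{\langle i,j\rangle\langle p,q\rangle}=S_{ip}S_{jq}+S_{iq}S_{jp}$, $S^{BHS}_{\langle i,j\rangle(p,\psi)}=S_{ip}S_{jp}$, $S^{BHS}_{\langle i,j\rangle\widehat{(p,\psi)}}=0$, $S^{BHS}_{(i,\psi)(j,\chi)}=\tfrac12 S_{ij}^2$, $S^{BHS}_{(i,\psi)\widehat{(p,\chi)}}=\tfrac12 e^{i\pi\psi}S_{ip}$, $S^{BHS}_{\widehat{(p,\psi)}\widehat{(q,\chi)}}=\tfrac12 e^{i\pi(\psi+\chi)}P_{pq}$ (and symmetric). Fusion coefficients of $\mathcal{A}_{\rm perm}$ are defined by the Verlinde formula $N_{AB}^{\ \ C}=\sum_{N}S^{BHS}_{AN}S^{BHS}_{BN}\overline{S^{BHS}_{CN}}/S^{BHS}_{(0,0)N}$, the sum running over all primaries $N$ of $\mathcal{A}_{\rm perm}$. *)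

theory Defs
  imports Complex_Main
begin

text \<open>Data of the RCFT: the index set of primaries is a finite type 'i (a linear
order on it is only used to pick a canonical representative of unordered pairs),
identity z, modular matrix S, conformal weights h, central charge c.\<close>

definition fus :: "('i::finite \<Rightarrow> 'i \<Rightarrow> complex) \<Rightarrow> 'i \<Rightarrow> 'i \<Rightarrow> 'i \<Rightarrow> 'i \<Rightarrow> complex" where
  "fus S z i j k = (\<Sum>m\<in>UNIV. S i m * S j m * cnj (S k m) / S z m)"

definition rcft :: "('i::finite \<Rightarrow> 'i \<Rightarrow> complex) \<Rightarrow> 'i \<Rightarrow> bool" where
  "rcft S z \<longleftrightarrow>
     (\<forall>i j. S i j = S j i) \<and>
     (\<forall>i j. (\<Sum>k\<in>UNIV. S i k * cnj (S j k)) = (if i = j then 1 else 0)) \<and>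
     (\<forall>i. S z i \<in> \<real>) \<and> 0 < Re (S z z) \<and> (\<forall>i. Re (S z z) \<le> Re (S z i)) \<and>
     (\<forall>i j k. fus S z i j k \<in> \<nat>)"

definition thalf :: "('i \<Rightarrow> real) \<Rightarrow> real \<Rightarrow> 'i \<Rightarrow> complex" where
  "thalf h c i = exp (\<i> * complex_of_real (pi * (h i - c / 24)))"

definition Tdiag :: "('i \<Rightarrow> real) \<Rightarrow> real \<Rightarrow> 'i \<Rightarrow> complex" where
  "Tdiag h c i = exp (\<i> * complex_of_real (2 * pi * (h i - c / 24)))"

definition Pmat :: "('i::finite \<Rightarrow> 'i \<Rightarrow> complex) \<Rightarrow> ('i \<Rightarrow> real) \<Rightarrow> real \<Rightarrow> 'i \<Rightarrow> 'i \<Rightarrow> complex" where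
  "Pmat S h c p q = thalf h c p * (\<Sum>k\<in>UNIV. S p k * (Tdiag h c k)^2 * S k q) * thalf h c q"

definition simple_current :: "('i \<Rightarrow> 'i \<Rightarrow> complex) \<Rightarrow> 'i \<Rightarrow> 'i \<Rightarrow> bool" where
  "simple_current S z J \<longleftrightarrow> S J z = S z z"

definition sc_act :: "('i::finite \<Rightarrow> 'i \<Rightarrow> complex) \<Rightarrow> 'i \<Rightarrow> 'i \<Rightarrow> 'i \<Rightarrow> 'i" where
  "sc_act S z J i = (THE k. \<forall>l. fus S z J i l = (if l = k then 1 else 0))"

text \<open>Primaries of the Z2 permutation orbifold; the bool encodes psi (False = 0, True = 1).
Off i j represents the unordered pair <i,j>; the canonical representative has i < j.\<close>
datatype 'i pfield = Diag 'i bool | Off 'i 'i | Tw 'i bool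

definition off :: "'i::linorder \<Rightarrow> 'i \<Rightarrow> 'i pfield" where
  "off p q = Off (min p q) (max p q)"

definition prims :: "('i::linorder) pfield set" where
  "prims = range (\<lambda>(i, b). Diag i b) \<union> {Off i j | i j. i < j} \<union> range (\<lambda>(p, b). Tw p b)"

definition sgnb :: "bool \<Rightarrow> complex" where
  "sgnb b = (if b then -1 else 1)"   (* e^{i pi psi} *)

fun SB :: "('i \<Rightarrow> 'i \<Rightarrow> complex) \<Rightarrow> ('i \<Rightarrow> 'i \<Rightarrow> complex) \<Rightarrow> 'i pfield \<Rightarrow> 'i pfield \<Rightarrow> complex" where
  "SB S P (Off i j) (Off p q) = S i p * S j q + S i q * S j p"
| "SB S P (Off i j) (Diag p \<psi>) = S i p * S j p"
| "SB S P (Diag p \<psi>) (Off i j) = S i p * S j p"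
| "SB S P (Off i j) (Tw p \<psi>) = 0"
| "SB S P (Tw p \<psi>) (Off i j) = 0"
| "SB S P (Diag i \<psi>) (Diag j \<chi>) = (1/2) * (S i j)^2"
| "SB S P (Diag i \<psi>) (Tw p \<chi>) = (1/2) * sgnb \<psi> * S i p"
| "SB S P (Tw p \<chi>) (Diag i \<psi>) = (1/2) * sgnb \<psi> * S i p"
| "SB S P (Tw p \<psi>) (Tw q \<chi>) = (1/2) * sgnb \<psi> * sgnb \<chi> * P p q"

definition fus_perm :: "('i::{finite,linorder} \<Rightarrow> 'i \<Rightarrow> complex) \<Rightarrow> 'i \<Rightarrow> ('i \<Rightarrow> real) \<Rightarrow> real
    \<Rightarrow> 'i pfield \<Rightarrow> 'i pfield \<Rightarrow> 'i pfield \<Rightarrow> complex" where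
  "fus_perm S z h c A B C =
     (\<Sum>X\<in>prims. SB S (Pmat S h c) A X * SB S (Pmat S h c) B X * cnj (SB S (Pmat S h c) C X)
                 / SB S (Pmat S h c) (Diag z False) X)"

end

theory Submission
  imports Defs
begin

(*
  Part 1 of the theorem is a direct evaluation of the orbifold Verlinde formula.  Since
  S^BHS vanishes between off-diagonal and twisted fields, only diagonal and off-diagonal
  primaries contribute.  Writing u_pq(x) = S_Jx S_px conj(S_qx) / S_0x, the summand at <x,y>
  is G(x,y) + G(y,x) and the summand at (x,chi) is G(x,x)/2, where
  G(x,y) = u_pp'(x) u_qq'(y) + u_pq'(x) u_qp'(y).  Summing over x<y, over the diagonal and
  over chi gives the full double sum of G, which factorises into the products of ordinary
  fusion coefficients N_Jp^p' = sum_x u_pp'(x).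

  Part 2 needs that a simple current acts by a permutation: N_Ji^k = delta(k, Ji).  This is
  shown via a Perron-Frobenius type bound |S_Jm| <= S_0m for the non-negative fusion matrix
  N_J, whose eigenvectors are the columns of S; unitarity then forces |S_Jm| = S_0m, so the
  rows of N_J have unit Euclidean norm (Parseval) and, being integral, are unit vectors.
  Consequently S_(Ji)m = S_Jm S_im / S_0m, and J^2 = 0 makes i |-> Ji an involution, which
  turns the formula of part 1 into the stated fixed-point criterion.
*)

lemma rcft_sym: "rcft S z \<Longrightarrow> S i j = S j i"
  unfolding rcft_def by blast

lemma rcft_rows_orthonormal:
  "rcft S z \<Longrightarrow> (\<Sum>k\<in>UNIV. S i k * cnj (S j k)) = (if i = j then 1 else 0)"
  unfolding rcft_def by blast

lemma rcft_cols_orthonormal: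
  "rcft S z \<Longrightarrow> (\<Sum>k\<in>UNIV. S k i * cnj (S k j)) = (if i = j then 1 else 0)"
  using rcft_rows_orthonormal[of S z i j] rcft_sym[of S z] by simp

lemma rcft_fus_nat: "rcft S z \<Longrightarrow> fus S z i j k \<in> \<nat>"
  unfolding rcft_def by blast

lemma rcft_S0_pos: "rcft S z \<Longrightarrow> 0 < Re (S z i)"
  unfolding rcft_def by (meson less_le_trans)

lemma rcft_S0_nonzero: "rcft S z \<Longrightarrow> S z i \<noteq> 0"
  using rcft_S0_pos[of S z i] by auto

lemma rcft_row_norm:
  assumes "rcft S z" shows "(\<Sum>k\<in>UNIV. (cmod (S i k))^2) = 1"
proof -
  have "of_real (\<Sum>k\<in>UNIV. (cmod (S i k))^2) = (1::complex)"
    using rcft_rows_orthonormal[OF assms, of i i]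
    by (simp only: of_real_sum complex_norm_square) simp
  then show ?thesis by (metis of_real_1 of_real_eq_iff)
qed

text \<open>Distinct fields have distinct rows of S (the rows are orthonormal).\<close>

lemma rcft_rows_inj:
  assumes "rcft S z" and "\<And>k. S a k = S b k"
  shows "a = b"
proof -
  have "(\<Sum>k\<in>UNIV. S a k * cnj (S b k)) = 1"
    using rcft_rows_orthonormal[OF assms(1), of b b] by (simp add: assms(2))
  then show ?thesis using rcft_rows_orthonormal[OF assms(1), of a b] by (auto split: if_splits)
qed

lemma unitary_parseval:
  assumes "rcft S z"
  shows "(\<Sum>k\<in>UNIV. (cmod (\<Sum>m\<in>UNIV. w m * cnj (S k m)))^2)
    = (\<Sum>m\<in>UNIV. (cmod (w m))^2)"
proof -
  have "(of_real (\<Sum>k\<in>UNIV. (cmod (\<Sum>m\<in>UNIV. w m * cnj (S k m)))^2) :: complex)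
     = (\<Sum>k\<in>UNIV. (\<Sum>m\<in>UNIV. w m * cnj (S k m)) * cnj (\<Sum>m'\<in>UNIV. w m' * cnj (S k m')))"
    by (simp only: of_real_sum complex_norm_square)
  also have "\<dots>
      = (\<Sum>k\<in>UNIV. \<Sum>m'\<in>UNIV. \<Sum>m\<in>UNIV. w m * cnj (w m') * (S k m' * cnj (S k m)))"
    by (simp add: sum_distrib_left sum_distrib_right mult_ac)
  also have "\<dots>
      = (\<Sum>m'\<in>UNIV. \<Sum>k\<in>UNIV. \<Sum>m\<in>UNIV. w m * cnj (w m') * (S k m' * cnj (S k m)))"
    by (rule sum.swap)
  also have "\<dots>
      = (\<Sum>m'\<in>UNIV. \<Sum>m\<in>UNIV. \<Sum>k\<in>UNIV. w m * cnj (w m') * (S k m' * cnj (S k m)))"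
    by (rule sum.cong[OF refl], rule sum.swap)
  also have "\<dots> = (\<Sum>m'\<in>UNIV. \<Sum>m\<in>UNIV. w m * cnj (w m') * (\<Sum>k\<in>UNIV. S k m' * cnj (S k m)))"
    by (simp only: sum_distrib_left)
  also have "\<dots> = (\<Sum>m\<in>UNIV. w m * cnj (w m))"
    by (simp add: rcft_cols_orthonormal[OF assms] if_distrib cong: if_cong)
  also have "\<dots> = of_real (\<Sum>m\<in>UNIV. (cmod (w m))^2)"
    by (simp only: of_real_sum complex_norm_square)
  finally show ?thesis by (simp only: of_real_eq_iff)
qed

section \<open>Simple currents act by permutations\<close>

lemma verlinde_eigenvector:
  assumes "rcft S z"
  shows "(\<Sum>k\<in>UNIV. fus S z j i k * S k m) = S j m * S i m / S z m"
proof -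
  have "(\<Sum>k\<in>UNIV. fus S z j i k * S k m)
      = (\<Sum>k\<in>UNIV. \<Sum>m'\<in>UNIV. S j m' * S i m' / S z m' * (S k m * cnj (S k m')))"
    unfolding fus_def by (simp add: sum_distrib_left mult_ac)
  also have "\<dots> = (\<Sum>m'\<in>UNIV. S j m' * S i m' / S z m' * (\<Sum>k\<in>UNIV. S k m * cnj (S k m')))"
    by (subst sum.swap) (simp add: sum_distrib_left)
  also have "\<dots> = S j m * S i m / S z m"
    by (simp add: rcft_cols_orthonormal[OF assms] if_distrib cong: if_cong)
  finally show ?thesis .
qed

text \<open>A Perron-Frobenius type bound: if a non-negative matrix fixes a positive vector,
  then all its eigenvalues have modulus at most 1.  The proof compares an eigenvector w with
  v at an index where |w_k| / v_k is maximal.\<close>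

lemma nonneg_matrix_eigenvalue_bound:
  fixes M :: "'i::finite \<Rightarrow> 'i \<Rightarrow> real" and v :: "'i \<Rightarrow> real" and w :: "'i \<Rightarrow> complex"
  assumes M_nonneg: "\<And>i k. 0 \<le> M i k" and v_pos: "\<And>k. 0 < v k"
    and v_fixed: "\<And>i. (\<Sum>k\<in>UNIV. M i k * v k) = v i"
    and w_eigen: "\<And>i. (\<Sum>k\<in>UNIV. of_real (M i k) * w k) = \<mu> * w i"
    and w_nonzero: "w j \<noteq> 0"
  shows "cmod \<mu> \<le> 1"
proof -
  define t where "t = Max (range (\<lambda>k. cmod (w k) / v k))"
  obtain i where t_attained: "cmod (w i) / v i = t"
    unfolding t_def by (metis (mono_tags, lifting) Max_in finite_UNIV finite_imageI imageE
        image_is_empty UNIV_not_empty)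
  have w_le: "cmod (w k) \<le> t * v k" for k
    using Max_ge[of "range (\<lambda>k. cmod (w k) / v k)" "cmod (w k) / v k"] v_pos[of k]
    unfolding t_def by (simp add: divide_le_eq)
  have "0 < cmod (w j) / v j" using w_nonzero v_pos[of j] by simp
  also have "\<dots> \<le> t" unfolding t_def by simp
  finally have "0 < cmod (w i)" using t_attained v_pos[of i] by (simp add: field_simps)
  have "cmod \<mu> * cmod (w i) = cmod (\<Sum>k\<in>UNIV. of_real (M i k) * w k)"
    by (simp add: w_eigen norm_mult)
  also have "\<dots> \<le> (\<Sum>k\<in>UNIV. M i k * cmod (w k))"
    by (rule order_trans[OF norm_sum]) (simp add: norm_mult M_nonneg)
  also have "\<dots> \<le> (\<Sum>k\<in>UNIV. M i k * (t * v k))"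
    by (rule sum_mono, rule mult_left_mono[OF w_le M_nonneg])
  also have "\<dots> = t * (\<Sum>k\<in>UNIV. M i k * v k)"
    by (simp add: sum_distrib_left mult_ac)
  also have "\<dots> = t * v i" by (simp only: v_fixed)
  also have "\<dots> = cmod (w i)" using t_attained v_pos[of i] by (simp add: field_simps)
  finally show ?thesis using \<open>0 < cmod (w i)\<close> by simp
qed

text \<open>Applied to N_J, which fixes the positive vector S_0 because S_J0 = S_00, the bound
  gives |S_Jm| <= S_0m.\<close>

lemma simple_current_abs_le:
  assumes r: "rcft S z" and sc: "simple_current S z J"
  shows "cmod (S J m) \<le> cmod (S z m)"
proof -
  define M where "M i k = Re (fus S z J i k)" for i k
  have fus_eq: "fus S z J i k = of_real (M i k)" and M_nonneg: "0 \<le> M i k" for i k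
    using rcft_fus_nat[OF r, of J i k] unfolding M_def by (auto elim!: Nats_cases)
  have "(\<Sum>k\<in>UNIV. M i k * Re (S z k)) = Re (S z i)" for i
  proof -
    have "(\<Sum>k\<in>UNIV. fus S z J i k * S k z) = S z i"
      using verlinde_eigenvector[OF r, of J i z] sc rcft_S0_nonzero[OF r, of z]
      by (simp add: simple_current_def rcft_sym[OF r, of i z])
    then have "Re (\<Sum>k\<in>UNIV. of_real (M i k) * S z k) = Re (S z i)"
      by (simp add: fus_eq rcft_sym[OF r, of _ z])
    then show ?thesis by (simp add: Re_sum)
  qed
  moreover have "(\<Sum>k\<in>UNIV. of_real (M i k) * S k m) = S J m / S z m * S i m" for i
    using verlinde_eigenvector[OF r, of J i m] by (simp add: fus_eq)
  moreover obtain k0 where "S k0 m \<noteq> 0"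
  proof (rule ccontr)
    assume "\<not> thesis"
    then have "S k m = 0" for k using that by blast
    then have "(\<Sum>k\<in>UNIV. S k m * cnj (S k m)) = 0" by simp
    then show False using rcft_cols_orthonormal[OF r, of m m] by simp
  qed
  ultimately have "cmod (S J m / S z m) \<le> 1"
    by (rule nonneg_matrix_eigenvalue_bound[where w = "\<lambda>k. S k m",
          OF M_nonneg rcft_S0_pos[OF r]])
  then show ?thesis using rcft_S0_nonzero[OF r, of m] by (simp add: norm_divide divide_le_eq)
qed

text \<open>Both rows have unit norm, so the inequality is an equality everywhere.\<close>

lemma simple_current_abs_eq:
  assumes r: "rcft S z" and sc: "simple_current S z J"
  shows "cmod (S J m) = cmod (S z m)"
proof -
  have "(\<Sum>k\<in>UNIV. (cmod (S J k))^2) = (\<Sum>k\<in>UNIV. (cmod (S z k))^2)"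
    by (simp only: rcft_row_norm[OF r])
  moreover have "(cmod (S J k))^2 \<le> (cmod (S z k))^2" for k
    by (rule power_mono[OF simple_current_abs_le[OF r sc] norm_ge_zero])
  ultimately have "(cmod (S J m))^2 = (cmod (S z m))^2"
    by (rule sum_mono_inv) simp_all
  then show ?thesis by (simp add: power2_eq_iff_nonneg)
qed

lemma simple_current_fus_square_sum:
  assumes r: "rcft S z" and sc: "simple_current S z J"
  shows "(\<Sum>k\<in>UNIV. (cmod (fus S z J i k))^2) = 1"
proof -
  let ?w = "\<lambda>m. S J m * S i m / S z m"
  have "fus S z J i k = (\<Sum>m\<in>UNIV. ?w m * cnj (S k m))" for k
    unfolding fus_def by (simp add: field_simps)
  then have "(\<Sum>k\<in>UNIV. (cmod (fus S z J i k))^2) = (\<Sum>m\<in>UNIV. (cmod (?w m))^2)"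
    using unitary_parseval[OF r, of ?w] by simp
  also have "\<dots> = (\<Sum>m\<in>UNIV. (cmod (S i m))^2)"
    using simple_current_abs_eq[OF r sc] rcft_S0_nonzero[OF r] by (simp add: norm_mult norm_divide)
  finally show ?thesis using rcft_row_norm[OF r] by simp
qed

lemma nat_square_sum_one:
  fixes f :: "'a::finite \<Rightarrow> nat"
  assumes "(\<Sum>k\<in>UNIV. (f k)^2) = 1"
  shows "\<exists>k. \<forall>l. f l = (if l = k then 1 else 0)"
proof -
  obtain k where "f k \<noteq> 0"
  proof (rule ccontr)
    assume "\<not> thesis"
    then have "f k = 0" for k using that by blast
    then have "(\<Sum>k\<in>UNIV. (f k)^2) = 0" by simp
    then show False using assms by simp
  qed
  have le: "(\<Sum>k\<in>A. (f k)^2) \<le> 1" for A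
    using sum_mono2[of UNIV A "\<lambda>k. (f k)^2"] assms by simp
  have "(f k)^2 \<le> 1" using le[of "{k}"] by simp
  then have fk: "f k = 1" using \<open>f k \<noteq> 0\<close> by (cases "f k") (auto simp: power2_eq_square)
  have others: "f l = 0" if "l \<noteq> k" for l
    using le[of "{k, l}"] that fk by simp
  show ?thesis by (rule exI[of _ k]) (simp add: fk others)
qed

lemma simple_current_fus_delta:
  assumes r: "rcft S z" and sc: "simple_current S z J"
  shows "fus S z J i l = (if l = sc_act S z J i then 1 else 0)"
proof -
  have "\<forall>l. \<exists>n::nat. fus S z J i l = of_nat n"
    using rcft_fus_nat[OF r] by (metis Nats_cases)
  then obtain f :: "'a \<Rightarrow> nat" where f: "\<And>l. fus S z J i l = of_nat (f l)" by metis
  have "real (\<Sum>k\<in>UNIV. (f k)^2) = (\<Sum>k\<in>UNIV. (cmod (fus S z J i k))^2)"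
    by (simp add: f)
  then have "(\<Sum>k\<in>UNIV. (f k)^2) = 1"
    using simple_current_fus_square_sum[OF r sc, of i] by linarith
  then obtain k where "\<And>l. f l = (if l = k then 1 else 0)"
    using nat_square_sum_one by blast
  then have delta_k: "\<And>l. fus S z J i l = (if l = k then 1 else 0)" by (simp add: f)
  have "sc_act S z J i = k" unfolding sc_act_def
  proof (rule the_equality)
    show "\<forall>l. fus S z J i l = (if l = k then 1 else 0)" by (simp add: delta_k)
    fix k' assume "\<forall>l. fus S z J i l = (if l = k' then 1 else 0)"
    then show "k' = k" using delta_k[of k'] by (metis zero_neq_one)
  qed
  then show ?thesis by (simp add: delta_k)
qed

lemma S_sc_act:
  assumes r: "rcft S z" and sc: "simple_current S z J"
  shows "S (sc_act S z J i) m = S J m * S i m / S z m"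
  using verlinde_eigenvector[OF r, of J i m]
  by (simp add: simple_current_fus_delta[OF r sc] if_distrib[of "\<lambda>x. x * _"] cong: if_cong)

lemma sc_act_involution:
  assumes r: "rcft S z" and sc: "simple_current S z J" and order_two: "sc_act S z J J = z"
  shows "sc_act S z J (sc_act S z J i) = i"
proof (rule rcft_rows_inj[OF r])
  fix m
  have nz: "S z m \<noteq> 0" by (rule rcft_S0_nonzero[OF r])
  have "S z m = S J m * S J m / S z m" using S_sc_act[OF r sc, of J m] order_two by simp
  then have "S J m * S J m = S z m * S z m" using nz by (simp add: field_simps)
  then show "S (sc_act S z J (sc_act S z J i)) m = S i m"
    using nz by (simp add: S_sc_act[OF r sc] field_simps)
qed

section \<open>Fusion in the permutation orbifold\<close>

lemma sum_prims:
  fixes \<phi> :: "('i::{finite,linorder}) pfield \<Rightarrow> 'a::comm_monoid_add"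
  shows "(\<Sum>X\<in>prims. \<phi> X) = (\<Sum>ib\<in>UNIV. \<phi> (Diag (fst ib) (snd ib)))
     + (\<Sum>ij\<in>{ij. fst ij < snd ij}. \<phi> (Off (fst ij) (snd ij)))
     + (\<Sum>pb\<in>UNIV. \<phi> (Tw (fst pb) (snd pb)))"
proof -
  let ?D = "range (\<lambda>(i::'i, b). Diag i b)"
  let ?O = "(\<lambda>ij. Off (fst ij) (snd ij)) ` {ij::'i \<times> 'i. fst ij < snd ij}"
  let ?T = "range (\<lambda>(p::'i, b). Tw p b)"
  have prims_split: "prims = ?D \<union> ?O \<union> ?T" unfolding prims_def by (auto simp: image_iff)
  have "?D \<inter> ?O = {}" and "(?D \<union> ?O) \<inter> ?T = {}" by auto
  then have "(\<Sum>X\<in>prims. \<phi> X) = sum \<phi> ?D + sum \<phi> ?O + sum \<phi> ?T"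
    unfolding prims_split by (simp add: sum.union_disjoint)
  also have "sum \<phi> ?D = (\<Sum>ib\<in>UNIV. \<phi> (Diag (fst ib) (snd ib)))"
    by (subst sum.reindex) (auto simp: inj_on_def case_prod_beta)
  also have "sum \<phi> ?O = (\<Sum>ij\<in>{ij. fst ij < snd ij}. \<phi> (Off (fst ij) (snd ij)))"
    by (subst sum.reindex) (auto simp: inj_on_def prod_eq_iff)
  also have "sum \<phi> ?T = (\<Sum>pb\<in>UNIV. \<phi> (Tw (fst pb) (snd pb)))"
    by (subst sum.reindex) (auto simp: inj_on_def case_prod_beta)
  finally show ?thesis .
qed

lemma sum_square_split:
  fixes G :: "'i::{finite,linorder} \<Rightarrow> 'i \<Rightarrow> 'a::comm_monoid_add"
  shows "(\<Sum>x\<in>UNIV. \<Sum>y\<in>UNIV. G x y)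
    = (\<Sum>x\<in>UNIV. G x x) + (\<Sum>p\<in>{p. fst p < snd p}. G (fst p) (snd p) + G (snd p) (fst p))"
proof -
  let ?U = "{p::'i \<times> 'i. fst p < snd p}" and ?L = "{p::'i \<times> 'i. snd p < fst p}"
    and ?D = "{p::'i \<times> 'i. fst p = snd p}"
  have "(\<Sum>x\<in>UNIV. \<Sum>y\<in>UNIV. G x y) = (\<Sum>p\<in>?D \<union> ?U \<union> ?L. G (fst p) (snd p))"
    by (simp add: sum.cartesian_product case_prod_beta) (rule sum.cong; auto)
  also have "\<dots> = (\<Sum>p\<in>?D. G (fst p) (snd p)) + (\<Sum>p\<in>?U. G (fst p) (snd p))
      + (\<Sum>p\<in>?L. G (fst p) (snd p))"
    by (subst sum.union_disjoint; auto)+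
  also have "(\<Sum>p\<in>?D. G (fst p) (snd p)) = (\<Sum>x\<in>UNIV. G x x)"
    by (rule sum.reindex_bij_witness[of _ "\<lambda>x. (x, x)" fst]) auto
  also have "(\<Sum>p\<in>?L. G (fst p) (snd p)) = (\<Sum>p\<in>?U. G (snd p) (fst p))"
    by (rule sum.reindex_bij_witness[of _ "\<lambda>(x, y). (y, x)" "\<lambda>(x, y). (y, x)"]) auto
  finally show ?thesis by (simp add: sum.distrib add.assoc)
qed

text \<open>The fusion coefficient of a diagonal field (J,psi) with off-diagonal fields, for any
  field J; this is part 1 of the theorem for canonical representatives.\<close>

lemma fus_perm_Diag_Off_Off:
  fixes S :: "'i::{finite,linorder} \<Rightarrow> 'i \<Rightarrow> complex"
  assumes r: "rcft S z"
  shows "fus_perm S z h c (Diag J \<psi>) (Off a b) (Off a' b')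
    = fus S z J a a' * fus S z J b b' + fus S z J a b' * fus S z J b a'"
proof -
  let ?SB = "SB S (Pmat S h c)"
  define \<phi> where "\<phi> X = ?SB (Diag J \<psi>) X * ?SB (Off a b) X * cnj (?SB (Off a' b') X)
    / ?SB (Diag z False) X" for X
  define u where "u p q x = S J x * S p x * cnj (S q x) / S z x" for p q x
  define G where "G x y = u a a' x * u b b' y + u a b' x * u b a' y" for x y
  have nz: "S z x \<noteq> 0" for x by (rule rcft_S0_nonzero[OF r])
  have Diag: "\<phi> (Diag m \<chi>) = G m m / 2" for m \<chi>
    unfolding \<phi>_def G_def u_def using nz[of m]
    by (simp add: field_simps power2_eq_square complex_cnj_mult)
  have Off: "\<phi> (Off x y) = G x y + G y x" for x y
    unfolding \<phi>_def G_def u_def using nz[of x] nz[of y]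
    by (simp add: rcft_sym[OF r, of x J] rcft_sym[OF r, of y J] rcft_sym[OF r, of x z]
        rcft_sym[OF r, of y z]) (simp add: field_simps complex_cnj_mult)
  have Tw: "\<phi> (Tw p \<chi>) = 0" for p \<chi> unfolding \<phi>_def by simp
  have "fus_perm S z h c (Diag J \<psi>) (Off a b) (Off a' b') = sum \<phi> prims"
    unfolding fus_perm_def \<phi>_def ..
  also have "\<dots> = (\<Sum>ib\<in>(UNIV::('i \<times> bool) set). G (fst ib) (fst ib) / 2)
      + (\<Sum>p\<in>{p. fst p < snd p}. G (fst p) (snd p) + G (snd p) (fst p))"
    by (simp add: sum_prims Diag Off Tw)
  also have "(\<Sum>ib\<in>(UNIV::('i \<times> bool) set). G (fst ib) (fst ib) / 2)
      = (\<Sum>x\<in>UNIV. \<Sum>b\<in>(UNIV::bool set). G x x / 2)"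
    by (simp only: sum.cartesian_product) (simp add: case_prod_beta)
  also have "\<dots> = (\<Sum>x\<in>UNIV. G x x)" by simp
  also have "(\<Sum>x\<in>UNIV. G x x) + (\<Sum>p\<in>{p. fst p < snd p}. G (fst p) (snd p) + G (snd p) (fst p))
      = (\<Sum>x\<in>UNIV. \<Sum>y\<in>UNIV. G x y)"
    by (rule sum_square_split[symmetric])
  also have "\<dots> = fus S z J a a' * fus S z J b b' + fus S z J a b' * fus S z J b a'"
    unfolding G_def fus_def u_def by (simp add: sum.distrib sum_product)
  finally show ?thesis .
qed

text \<open>The main theorem: part 1 follows for arbitrary orderings of the pairs by the
  symmetry of the formula, and part 2 by inserting the Kronecker deltas.\<close>

theorem mainTheorem3:
  fixes S :: "'i::{finite,linorder} \<Rightarrow> 'i \<Rightarrow> complex"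
    and z J :: 'i and h :: "'i \<Rightarrow> real" and c :: real
  assumes "rcft S z" and "simple_current S z J"
  shows "(\<forall>\<psi> p q p' q'. p \<noteq> q \<longrightarrow> p' \<noteq> q' \<longrightarrow>
            fus_perm S z h c (Diag J \<psi>) (off p q) (off p' q')
              = fus S z J p p' * fus S z J q q' + fus S z J p q' * fus S z J q p')
       \<and> (sc_act S z J J = z \<longrightarrow>
            (\<forall>\<psi> p q. p \<noteq> q \<longrightarrow>
              (fus_perm S z h c (Diag J \<psi>) (off p q) (off p q) = 1 \<longleftrightarrow>
                 (sc_act S z J p = p \<and> sc_act S z J q = q) \<or> sc_act S z J p = q)))"
proof -
  note r = assms(1) and sc = assms(2)
  have formula: "fus_perm S z h c (Diag J \<psi>) (off p q) (off p' q')
      = fus S z J p p' * fus S z J q q' + fus S z J p q' * fus S z J q p'" for \<psi> p q p' q'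
    unfolding off_def fus_perm_Diag_Off_Off[OF r]
    by (cases "p \<le> q"; cases "p' \<le> q'") (simp_all add: min_def max_def add.commute mult.commute)
  have fixed_point: "fus_perm S z h c (Diag J \<psi>) (off p q) (off p q) = 1 \<longleftrightarrow>
      (sc_act S z J p = p \<and> sc_act S z J q = q) \<or> sc_act S z J p = q"
    if order_two: "sc_act S z J J = z" and "p \<noteq> q" for \<psi> p q
    unfolding formula simple_current_fus_delta[OF r sc]
    using \<open>p \<noteq> q\<close> sc_act_involution[OF r sc order_two, of p]
      sc_act_involution[OF r sc order_two, of q] by auto
  show ?thesis using formula fixed_point by blast
qed

end
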